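(* Suppose $p_j,p_{j'}$ (with $j<j'$, on segments $s_i,s_{i'}$ respectively) are two consecutive reflection points of $\mathrm{OPT}$ in its orientation, i.e. no other reflection point is visited between them. Then $p_j$ and $p_{j'}$ are not both left reflection points and not both right reflection points. Furthermore, if $s_i$ is to the left of $s_{i'}$, then $p_j$ is a right reflection point and $p_{j'}$ is a left reflection point (and the opposite holds if $s_{i'}$ is to the left of $s_i$).
   Context: Instance: vertical line segments $s_1,\dots,s_n$ in $\mathbb{R}^2$, each of length $1$, with pairwise distinct $x$-coordinates. A tour is a cyclic sequence of points $p_1,\dots,p_\sigma$, each on some segment, with every segment containing at least one $p_j$; the straight segments joining consecutive points are legs. $\mathrm{OPT}$ is a fixed minimum-cost tour, oriented $p_1\to p_2\to\cdots$, with no two consecutive points on the same segment (no vertical legs) and not self-crossing. A point $p_j$ of $\mathrm{OPT}$ on segment $s$ is a left (resp. right) reflection point if both of its incident legs lie in the half-plane $x\le x(s)$ (resp. $x\ge x(s)$); a reflection point is a left or right reflection point. *)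

theory Defs
  imports "HOL-Analysis.Analysis"
begin

definition seg :: "(nat \<Rightarrow> real \<times> real) \<Rightarrow> nat \<Rightarrow> (real \<times> real) set" where
  "seg c k = {q. fst q = fst (c k) \<and> snd (c k) \<le> snd q \<and> snd q \<le> snd (c k) + 1}"

definition nxt :: "nat \<Rightarrow> nat \<Rightarrow> nat" where
  "nxt \<sigma> j = (if j = \<sigma> then 1 else j + 1)"

definition prv :: "nat \<Rightarrow> nat \<Rightarrow> nat" where
  "prv \<sigma> j = (if j = 1 then \<sigma> else j - 1)"

definition is_tour :: "nat \<Rightarrow> (nat \<Rightarrow> real \<times> real) \<Rightarrow> nat \<Rightarrow> (nat \<Rightarrow> real \<times> real) \<Rightarrow> bool" where
  "is_tour n c \<sigma> p \<longleftrightarrow> 1 \<le> \<sigma> \<and>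
     (\<forall>j\<in>{1..\<sigma>}. \<exists>k\<in>{1..n}. p j \<in> seg c k) \<and>
     (\<forall>k\<in>{1..n}. \<exists>j\<in>{1..\<sigma>}. p j \<in> seg c k)"

definition tour_cost :: "nat \<Rightarrow> (nat \<Rightarrow> real \<times> real) \<Rightarrow> real" where
  "tour_cost \<sigma> p = (\<Sum>j=1..\<sigma>. dist (p j) (p (nxt \<sigma> j)))"

definition is_opt_tour :: "nat \<Rightarrow> (nat \<Rightarrow> real \<times> real) \<Rightarrow> nat \<Rightarrow> (nat \<Rightarrow> real \<times> real) \<Rightarrow> bool" where
  "is_opt_tour n c \<sigma> p \<longleftrightarrow> is_tour n c \<sigma> p \<and>
     (\<forall>\<sigma>' q. is_tour n c \<sigma>' q \<longrightarrow> tour_cost \<sigma> p \<le> tour_cost \<sigma>' q)"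

definition no_vertical_legs :: "nat \<Rightarrow> (nat \<Rightarrow> real \<times> real) \<Rightarrow> nat \<Rightarrow> (nat \<Rightarrow> real \<times> real) \<Rightarrow> bool" where
  "no_vertical_legs n c \<sigma> p \<longleftrightarrow>
     (\<forall>j\<in>{1..\<sigma>}. \<not> (\<exists>k\<in>{1..n}. p j \<in> seg c k \<and> p (nxt \<sigma> j) \<in> seg c k))"

definition crosses :: "real \<times> real \<Rightarrow> real \<times> real \<Rightarrow> real \<times> real \<Rightarrow> real \<times> real \<Rightarrow> bool" where
  "crosses a b a' b' \<longleftrightarrow> (\<exists>z. closed_segment a b \<inter> closed_segment a' b' = {z} \<and>
      z \<notin> {a, b, a', b'})"

definition self_crossing :: "nat \<Rightarrow> (nat \<Rightarrow> real \<times> real) \<Rightarrow> bool" where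
  "self_crossing \<sigma> p \<longleftrightarrow> (\<exists>j\<in>{1..\<sigma>}. \<exists>j'\<in>{1..\<sigma>}. j \<noteq> j' \<and>
      crosses (p j) (p (nxt \<sigma> j)) (p j') (p (nxt \<sigma> j')))"

definition left_refl :: "nat \<Rightarrow> (nat \<Rightarrow> real \<times> real) \<Rightarrow> nat \<Rightarrow> (nat \<Rightarrow> real \<times> real) \<Rightarrow> nat \<Rightarrow> bool" where
  "left_refl n c \<sigma> p j \<longleftrightarrow> (\<exists>k\<in>{1..n}. p j \<in> seg c k \<and>
      closed_segment (p (prv \<sigma> j)) (p j) \<subseteq> {q. fst q \<le> fst (c k)} \<and>
      closed_segment (p j) (p (nxt \<sigma> j)) \<subseteq> {q. fst q \<le> fst (c k)})"

definition right_refl :: "nat \<Rightarrow> (nat \<Rightarrow> real \<times> real) \<Rightarrow> nat \<Rightarrow> (nat \<Rightarrow> real \<times> real) \<Rightarrow> nat \<Rightarrow> bool" where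
  "right_refl n c \<sigma> p j \<longleftrightarrow> (\<exists>k\<in>{1..n}. p j \<in> seg c k \<and>
      closed_segment (p (prv \<sigma> j)) (p j) \<subseteq> {q. fst q \<ge> fst (c k)} \<and>
      closed_segment (p j) (p (nxt \<sigma> j)) \<subseteq> {q. fst q \<ge> fst (c k)})"

definition refl_pt :: "nat \<Rightarrow> (nat \<Rightarrow> real \<times> real) \<Rightarrow> nat \<Rightarrow> (nat \<Rightarrow> real \<times> real) \<Rightarrow> nat \<Rightarrow> bool" where
  "refl_pt n c \<sigma> p j \<longleftrightarrow> left_refl n c \<sigma> p j \<or> right_refl n c \<sigma> p j"

end

theory Submission
  imports Defs
begin

text \<open>Since the segments have pairwise distinct x-coordinates and there are no vertical legs,
  the x-coordinate of OPT changes strictly along every leg. A point strictly between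
  two consecutive reflection points is no local extremum of this x-coordinate, so the
  x-coordinate is strictly monotone from p j to p j'. If it decreases, p j is a left
  and p j' a right reflection point, and s i' lies left of s i; symmetrically if it
  increases.\<close>

lemma closed_segment_subset_fst_halfplane_iff:
  fixes a b :: "real \<times> 'b::real_vector"
  shows "closed_segment a b \<subseteq> {q. fst q \<le> t} \<longleftrightarrow> fst a \<le> t \<and> fst b \<le> t"
    and "closed_segment a b \<subseteq> {q. fst q \<ge> t} \<longleftrightarrow> fst a \<ge> t \<and> fst b \<ge> t"
proof -
  have convex_fst_preimage: "convex {q :: real \<times> 'b. fst q \<in> S}" if "convex S" for S
    using convex_linear_vimage[OF linear_fst that] by (simp add: vimage_def)
  have "closed_segment a b \<subseteq> S \<longleftrightarrow> a \<in> S \<and> b \<in> S" if "convex S" for S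
    using that by (metis closed_segment_subset ends_in_segment subsetD)
  from this[OF convex_fst_preimage[of "{..t}"]] this[OF convex_fst_preimage[of "{t..}"]]
  show "closed_segment a b \<subseteq> {q. fst q \<le> t} \<longleftrightarrow> fst a \<le> t \<and> fst b \<le> t"
    and "closed_segment a b \<subseteq> {q. fst q \<ge> t} \<longleftrightarrow> fst a \<ge> t \<and> fst b \<ge> t"
    by simp_all
qed

lemma strict_descent_without_local_min:
  fixes f :: "nat \<Rightarrow> 'a::linorder"
  assumes start: "f (Suc j) < f j" and "j < j'"
    and no_local_min: "\<And>l. j < l \<Longrightarrow> l < j' \<Longrightarrow> \<not> (f l \<le> f (l - 1) \<and> f l \<le> f (Suc l))"
  shows "f j' < f (j' - 1) \<and> f j' < f j"
  using \<open>j < j'\<close> no_local_min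
proof (induction j')
  case 0
  then show ?case by simp
next
  case (Suc m)
  show ?case
  proof (cases "m = j")
    case True
    with start show ?thesis by simp
  next
    case False
    with Suc.prems(1) have "j < m" by simp
    with Suc.IH Suc.prems(2) have IH: "f m < f (m - 1)" "f m < f j" by auto
    moreover from Suc.prems(2)[OF \<open>j < m\<close>] have "\<not> (f m \<le> f (m - 1) \<and> f m \<le> f (Suc m))"
      by simp
    ultimately have "f (Suc m) < f m" by auto
    with IH show ?thesis by simp
  qed
qed

lemma strictly_monotone_between_local_extrema:
  fixes f :: "nat \<Rightarrow> real"
  assumes "j < j'" and "f (Suc j) \<noteq> f j"
    and "\<And>l. j < l \<Longrightarrow> l < j' \<Longrightarrow>
      \<not> (f l \<le> f (l - 1) \<and> f l \<le> f (Suc l)) \<and> \<not> (f (l - 1) \<le> f l \<and> f (Suc l) \<le> f l)"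
  shows "f (Suc j) < f j \<and> f j' < f (j' - 1) \<and> f j' < f j \<or>
         f j < f (Suc j) \<and> f (j' - 1) < f j' \<and> f j < f j'"
proof (cases "f (Suc j) < f j")
  case True
  with strict_descent_without_local_min[of f j j'] assms show ?thesis by blast
next
  case False
  with \<open>f (Suc j) \<noteq> f j\<close> have "- f (Suc j) < - f j" by simp
  with strict_descent_without_local_min[of "\<lambda>l. - f l" j j'] assms show ?thesis by auto
qed

lemma fst_in_seg: "q \<in> seg c k \<Longrightarrow> fst q = fst (c k)"
  by (simp add: seg_def)

lemma nxt_eq_Suc: "j < \<sigma> \<Longrightarrow> nxt \<sigma> j = Suc j"
  by (simp add: nxt_def)

lemma prv_eq_diff_one: "1 < j \<Longrightarrow> prv \<sigma> j = j - 1"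
  by (simp add: prv_def)

lemma left_refl_iff:
  assumes "k \<in> {1..n}" "p l \<in> seg c k"
  shows "left_refl n c \<sigma> p l \<longleftrightarrow>
    fst (p (prv \<sigma> l)) \<le> fst (p l) \<and> fst (p (nxt \<sigma> l)) \<le> fst (p l)"
proof -
  from assms(2) have "fst (p l) = fst (c k)" by (rule fst_in_seg)
  with assms show ?thesis unfolding left_refl_def closed_segment_subset_fst_halfplane_iff
    by (auto dest: fst_in_seg)
qed

lemma right_refl_iff:
  assumes "k \<in> {1..n}" "p l \<in> seg c k"
  shows "right_refl n c \<sigma> p l \<longleftrightarrow>
    fst (p (prv \<sigma> l)) \<ge> fst (p l) \<and> fst (p (nxt \<sigma> l)) \<ge> fst (p l)"
proof -
  from assms(2) have "fst (p l) = fst (c k)" by (rule fst_in_seg)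
  with assms show ?thesis unfolding right_refl_def closed_segment_subset_fst_halfplane_iff
    by (auto dest: fst_in_seg)
qed

lemma refl_pt_iff_local_extremum:
  assumes "is_tour n c \<sigma> p" and "l \<in> {1..\<sigma>}"
  shows "refl_pt n c \<sigma> p l \<longleftrightarrow>
    fst (p (prv \<sigma> l)) \<le> fst (p l) \<and> fst (p (nxt \<sigma> l)) \<le> fst (p l) \<or>
    fst (p (prv \<sigma> l)) \<ge> fst (p l) \<and> fst (p (nxt \<sigma> l)) \<ge> fst (p l)"
proof -
  from assms obtain k where k: "k \<in> {1..n}" "p l \<in> seg c k"
    unfolding is_tour_def by blast
  show ?thesis
    unfolding refl_pt_def left_refl_iff[where p = p and l = l, OF k]
      right_refl_iff[where p = p and l = l, OF k] ..
qed

lemma fst_nxt_neq: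
  assumes distinct_x: "inj_on (\<lambda>k. fst (c k)) {1..n}"
    and tour: "is_tour n c \<sigma> p" and novert: "no_vertical_legs n c \<sigma> p"
    and l: "l \<in> {1..\<sigma>}"
  shows "fst (p (nxt \<sigma> l)) \<noteq> fst (p l)"
proof
  assume eq: "fst (p (nxt \<sigma> l)) = fst (p l)"
  have "nxt \<sigma> l \<in> {1..\<sigma>}" using l by (auto simp: nxt_def)
  with l tour obtain k k' where k: "k \<in> {1..n}" "p l \<in> seg c k"
    and k': "k' \<in> {1..n}" "p (nxt \<sigma> l) \<in> seg c k'"
    unfolding is_tour_def by blast
  from eq k(2) k'(2) have "fst (c k') = fst (c k)" by (simp add: fst_in_seg)
  with distinct_x k(1) k'(1) have "k' = k" by (auto dest: inj_onD)
  with novert l k k' show False unfolding no_vertical_legs_def by blast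
qed

theorem lemma6:
  fixes n \<sigma> :: nat and c p :: "nat \<Rightarrow> real \<times> real" and i i' j j' :: nat
  assumes distinct_x: "inj_on (\<lambda>k. fst (c k)) {1..n}"
    and opt: "is_opt_tour n c \<sigma> p"
    and novert: "no_vertical_legs n c \<sigma> p"
    and nocross: "\<not> self_crossing \<sigma> p"
    and jj: "1 \<le> j" "j < j'" "j' \<le> \<sigma>"
    and rj: "refl_pt n c \<sigma> p j" and rj': "refl_pt n c \<sigma> p j'"
    and between: "\<forall>l. j < l \<and> l < j' \<longrightarrow> \<not> refl_pt n c \<sigma> p l"
    and i: "i \<in> {1..n}" "p j \<in> seg c i"
    and i': "i' \<in> {1..n}" "p j' \<in> seg c i'"
  shows "\<not> (left_refl n c \<sigma> p j \<and> left_refl n c \<sigma> p j') \<and>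
         \<not> (right_refl n c \<sigma> p j \<and> right_refl n c \<sigma> p j') \<and>
         (fst (c i) < fst (c i') \<longrightarrow> right_refl n c \<sigma> p j \<and> left_refl n c \<sigma> p j') \<and>
         (fst (c i') < fst (c i) \<longrightarrow> left_refl n c \<sigma> p j \<and> right_refl n c \<sigma> p j')"
proof -
  define X where "X l = fst (p l)" for l
  have tour: "is_tour n c \<sigma> p" using opt by (simp add: is_opt_tour_def)
  have "\<not> (X l \<le> X (l - 1) \<and> X l \<le> X (Suc l)) \<and> \<not> (X (l - 1) \<le> X l \<and> X (Suc l) \<le> X l)"
    if "j < l" "l < j'" for l
  proof -
    have "nxt \<sigma> l = Suc l" "prv \<sigma> l = l - 1"
      using that jj nxt_eq_Suc[of l \<sigma>] prv_eq_diff_one[of l \<sigma>] by auto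
    with refl_pt_iff_local_extremum[OF tour, of l] between that jj show ?thesis
      by (auto simp: X_def)
  qed
  moreover have "X (Suc j) \<noteq> X j"
    using fst_nxt_neq[OF distinct_x tour novert, of j] jj by (simp add: nxt_eq_Suc X_def)
  ultimately have "X (Suc j) < X j \<and> X j' < X (j' - 1) \<and> X j' < X j \<or>
      X j < X (Suc j) \<and> X (j' - 1) < X j' \<and> X j < X j'"
    using strictly_monotone_between_local_extrema[of j j' X] jj by blast
  moreover have "nxt \<sigma> j = Suc j" "prv \<sigma> j' = j' - 1"
    using jj nxt_eq_Suc[of j \<sigma>] prv_eq_diff_one[of j' \<sigma>] by auto
  moreover have "X j = fst (c i)" "X j' = fst (c i')"
    using i(2) i'(2) by (simp_all add: X_def fst_in_seg)
  ultimately show ?thesis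
    using rj rj' left_refl_iff[where p = p and l = j, OF i] right_refl_iff[where p = p and l = j, OF i]
      left_refl_iff[where p = p and l = j', OF i'] right_refl_iff[where p = p and l = j', OF i']
    unfolding refl_pt_def X_def by auto
qed

end
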